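(* (i) Let $\beta(x)=(1+x)^{-1}$. There exist $s\ge1$, $n>s+1$, a probability distribution $(p_{ij})$ on $\mathcal{P}_n$ with $p_{ij}=p_{ji}>0$, initial data $Y_0\in(\mathbb{R}^s)^n$ and a constant $c>0$ such that the solution $Y(t)$ of the gradient flow of relative entropy with $Y(0)=Y_0$ satisfies $\operatorname{diam}Y(t)\ge c\,t^{1/4}$ for all $t\ge0$. (ii) Let $\beta(x)=e^{-x}$. There exist $s\ge1$, $n>s+1$, a probability distribution $(p_{ij})$ on $\mathcal{P}_n$ with $p_{ij}=p_{ji}>0$, initial data $Y_0\in(\mathbb{R}^s)^n$ and a constant $c>0$ such that the corresponding solution satisfies $\operatorname{diam}Y(t)\ge c$ for all $t\ge0$. (In both cases such examples exist with $n=3$, $s=1$.)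
   Context: Standing setup. Fix integers $s\ge 1$ and $n>s+1$. Let $\mathcal{P}_n=\{(i,j): i,j\in\{1,\dots,n\},\ i\neq j\}$. Let $(p_{ij})_{i\neq j}$ be a probability distribution on $\mathcal{P}_n$ (so $\sum_{i\neq j}p_{ij}=1$) with $p_{ij}=p_{ji}>0$ for all $i\neq j$. Let $\beta:[0,\infty)\to(0,\infty)$ be a smooth decreasing function with $\sup_{x\ge 0}|(\log\beta)'(x)|<\infty$. For points $Y=(y_1,\dots,y_n)$ with $y_i\in\mathbb{R}^s$ define $q_{ij}=\beta(|y_i-y_j|^2)/\sum_{k\neq \ell}\beta(|y_k-y_\ell|^2)$ for $i\neq j$, and the relative entropy $\mathcal{C}(Y)=\sum_{i\neq j}p_{ij}\log(p_{ij}/q_{ij})$. The gradient flow of $\mathcal{C}$ is the ODE system $$\frac{dy_i}{dt}=4\sum_{j\neq i}(p_{ij}-q_{ij})(y_i-y_j)(\log\beta)'(|y_i-y_j|^2),\qquad i=1,\dots,n,$$ which, for any initial data $Y_0=Y(0)\in(\mathbb{R}^s)^n$, has a solution $Y(t)=(y_1(t),\dots,y_n(t))$ for all $t\ge0$. $\operatorname{diam}Y=\max_{i,j}|y_i-y_j|$. *)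

theory Defs
  imports "HOL-Analysis.Analysis"
begin

text \<open>Points of R^s are functions nat => real, coordinates indexed by {1..s};
 configurations Y = (y_1,...,y_n) are functions nat => (nat => real), indices {1..n}.\<close>

definition sqd :: "nat \<Rightarrow> (nat \<Rightarrow> real) \<Rightarrow> (nat \<Rightarrow> real) \<Rightarrow> real" where
  "sqd s x y = (\<Sum>k\<in>{1..s}. (x k - y k)^2)"

definition pairs :: "nat \<Rightarrow> (nat \<times> nat) set" where
  "pairs n = {(i,j). i \<in> {1..n} \<and> j \<in> {1..n} \<and> i \<noteq> j}"

definition sym_pos_prob :: "nat \<Rightarrow> (nat \<Rightarrow> nat \<Rightarrow> real) \<Rightarrow> bool" where
  "sym_pos_prob n p \<longleftrightarrow>
     (\<forall>(i,j)\<in>pairs n. p i j = p j i \<and> p i j > 0) \<and> (\<Sum>(i,j)\<in>pairs n. p i j) = 1"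

definition qaff :: "(real \<Rightarrow> real) \<Rightarrow> nat \<Rightarrow> nat \<Rightarrow> (nat \<Rightarrow> nat \<Rightarrow> real) \<Rightarrow> nat \<Rightarrow> nat \<Rightarrow> real" where
  "qaff \<beta> s n Y i j = \<beta> (sqd s (Y i) (Y j)) / (\<Sum>(k,l)\<in>pairs n. \<beta> (sqd s (Y k) (Y l)))"

text \<open>Right-hand side (k-th coordinate of dy_i/dt) of the gradient flow of relative entropy.\<close>
definition flow_rhs :: "(real \<Rightarrow> real) \<Rightarrow> nat \<Rightarrow> nat \<Rightarrow> (nat \<Rightarrow> nat \<Rightarrow> real)
    \<Rightarrow> (nat \<Rightarrow> nat \<Rightarrow> real) \<Rightarrow> nat \<Rightarrow> nat \<Rightarrow> real" where
  "flow_rhs \<beta> s n p Y i k = 4 * (\<Sum>j\<in>{1..n} - {i}.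
      (p i j - qaff \<beta> s n Y i j) * (Y i k - Y j k) * deriv (\<lambda>x. ln (\<beta> x)) (sqd s (Y i) (Y j)))"

definition is_flow_solution :: "(real \<Rightarrow> real) \<Rightarrow> nat \<Rightarrow> nat \<Rightarrow> (nat \<Rightarrow> nat \<Rightarrow> real)
    \<Rightarrow> (nat \<Rightarrow> nat \<Rightarrow> real) \<Rightarrow> (real \<Rightarrow> nat \<Rightarrow> nat \<Rightarrow> real) \<Rightarrow> bool" where
  "is_flow_solution \<beta> s n p Y0 Y \<longleftrightarrow>
     (\<forall>i\<in>{1..n}. \<forall>k\<in>{1..s}. Y 0 i k = Y0 i k) \<and>
     (\<forall>t\<ge>0. \<forall>i\<in>{1..n}. \<forall>k\<in>{1..s}.
        ((\<lambda>\<tau>. Y \<tau> i k) has_real_derivative flow_rhs \<beta> s n p (Y t) i k) (at t within {0..}))"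

definition diam_conf :: "nat \<Rightarrow> nat \<Rightarrow> (nat \<Rightarrow> nat \<Rightarrow> real) \<Rightarrow> real" where
  "diam_conf s n Y = Max {sqrt (sqd s (Y i) (Y j)) | i j. i \<in> {1..n} \<and> j \<in> {1..n}}"

end

theory Submission
  imports Defs
begin

text \<open>Both examples consist of three points on a line started at \<open>-1, 0, 1\<close>, with the outer pair
  attracted weakly (\<open>p\<^sub>1\<^sub>3 = 1/50\<close>) and the two inner pairs strongly (\<open>p\<^sub>1\<^sub>2 = p\<^sub>2\<^sub>3 = 6/25\<close>).
  The pairwise forces are odd, so the centre of mass is conserved, and a Gronwall argument keeps the
  middle point at the origin; the configuration is therefore \<open>(-c, 0, c)\<close>.
  For \<open>\<beta>(x) = 1/(1+x)\<close> the weight \<open>q\<^sub>1\<^sub>3\<close> that the flow gives to the outer pair never drops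
  below \<open>1/18 > p\<^sub>1\<^sub>3\<close>, so the outer points are pushed apart with \<open>c c' \<ge> c\<^sup>2 \<beta>(c\<^sup>2) \<beta>(4c\<^sup>2) / 6\<close>;
  hence \<open>c\<^sup>2\<close> never decreases and \<open>(c\<^sup>4)' \<ge> 1/15\<close>, giving \<open>diam Y(t) \<ge> t\<^sup>1\<^sup>/\<^sup>4\<close>.
  For \<open>\<beta>(x) = exp(-x)\<close> the relative entropy is a Lyapunov function of the flow: it starts below
  \<open>ln 6 - 1/100\<close>, whereas every configuration of diameter less than \<open>1/10\<close> has entropy above it.\<close>

lemma sqd_1: "sqd 1 x y = (x 1 - y 1)\<^sup>2"
  unfolding sqd_def by simp

lemma pairs_3: "pairs 3 = {(1,2), (1,3), (2,1), (2,3), (3,1), (3,2)}"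
  unfolding pairs_def by auto

lemma sum_pairs_3: "(\<Sum>(i, j)\<in>pairs 3. f i j) = f 1 2 + f 1 3 + f 2 1 + f 2 3 + f 3 1 + f 3 2"
  unfolding pairs_3 by (simp add: add.assoc)

lemma sym_pos_prob_3_sym:
  assumes "sym_pos_prob 3 p"
  shows "p 2 1 = p 1 2" "p 3 1 = p 1 3" "p 3 2 = p 2 3"
proof -
  have "p i j = p j i" if "(i, j) \<in> pairs 3" for i j
    using assms that unfolding sym_pos_prob_def by auto
  then show "p 2 1 = p 1 2" "p 3 1 = p 1 3" "p 3 2 = p 2 3"
    unfolding pairs_def by auto
qed

lemma sym_pos_prob_3_bounds:
  assumes "sym_pos_prob 3 p" "(i, j) \<in> pairs 3"
  shows "0 < p i j" "p i j \<le> 1"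
proof -
  have pos: "0 < p k l" if "(k, l) \<in> pairs 3" for k l
    using assms(1) that unfolding sym_pos_prob_def by auto
  have "(\<Sum>(k, l)\<in>pairs 3. p k l) = 1"
    using assms(1) unfolding sym_pos_prob_def by blast
  moreover have "0 < p 1 2" "0 < p 1 3" "0 < p 2 1" "0 < p 2 3" "0 < p 3 1" "0 < p 3 2"
    by (auto intro!: pos simp: pairs_def)
  ultimately show "0 < p i j" "p i j \<le> 1"
    using assms(2) unfolding sum_pairs_3 pairs_3 by auto
qed

lemma diam_conf_1_ge_dist:
  assumes "i \<in> {1..n}" "j \<in> {1..n}"
  shows "\<bar>Y i 1 - Y j 1\<bar> \<le> diam_conf 1 n Y"
proof -
  have "finite {sqrt (sqd 1 (Y i) (Y j)) | i j. i \<in> {1..n} \<and> j \<in> {1..n}}"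
    by (rule finite_image_set2) auto
  then have "sqrt (sqd 1 (Y i) (Y j)) \<le> diam_conf 1 n Y"
    unfolding diam_conf_def by (rule Max_ge) (use assms in blast)
  then show ?thesis
    unfolding sqd_1 by simp
qed

lemma powr_quarter_le:
  assumes "(t::real) \<ge> 0" "y \<ge> 0" "t \<le> y ^ 4"
  shows "t powr (1/4) \<le> y"
proof (rule ccontr)
  assume "\<not> ?thesis"
  then have "y ^ 4 < (t powr (1/4)) ^ 4"
    using assms(2) by (intro power_strict_mono) auto
  also have "\<dots> = t"
    using assms(1) by (cases "t = 0") (simp_all add: powr_power)
  finally show False
    using assms(3) by simp
qed

lemma nonincreasing_from_0:
  fixes f f' :: "real \<Rightarrow> real"
  assumes "\<And>t. t \<ge> 0 \<Longrightarrow> (f has_real_derivative f' t) (at t within {0..})"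
    and "\<And>t. t \<ge> 0 \<Longrightarrow> f' t \<le> 0" and "t \<ge> 0"
  shows "f t \<le> f 0"
proof (rule DERIV_nonpos_imp_decreasing_open[OF \<open>t \<ge> 0\<close>])
  show "continuous_on {0..t} f"
    by (rule continuous_on_subset[OF DERIV_continuous_on[of "{0..}" f f']]) (use assms(1) in auto)
  fix x :: real assume x: "0 < x" "x < t"
  then have "at x within {0..} = at x"
    by (intro at_within_interior) auto
  then show "\<exists>y. (f has_real_derivative y) (at x) \<and> y \<le> 0"
    using assms(1,2)[of x] x by auto
qed

lemma zero_if_derivative_linearly_bounded:
  fixes f f' :: "real \<Rightarrow> real"
  assumes "\<And>t. t \<ge> 0 \<Longrightarrow> (f has_real_derivative f' t) (at t within {0..})"
    and "\<And>t. t \<ge> 0 \<Longrightarrow> \<bar>f' t\<bar> \<le> L * \<bar>f t\<bar>" and "f 0 = 0" and "t \<ge> 0"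
  shows "f t = 0"
proof -
  have "(f t)\<^sup>2 * exp (-2 * L * t) \<le> (f 0)\<^sup>2 * exp (-2 * L * 0)"
  proof (rule nonincreasing_from_0[where f = "\<lambda>\<tau>. (f \<tau>)\<^sup>2 * exp (-2 * L * \<tau>)"])
    fix \<tau> :: real assume "\<tau> \<ge> 0"
    then show "((\<lambda>\<tau>. (f \<tau>)\<^sup>2 * exp (-2 * L * \<tau>)) has_real_derivative
        2 * (f \<tau> * f' \<tau> - L * (f \<tau>)\<^sup>2) * exp (-2 * L * \<tau>)) (at \<tau> within {0..})"
      using assms(1) by (auto intro!: derivative_eq_intros simp: algebra_simps)
    have "f \<tau> * f' \<tau> \<le> \<bar>f \<tau>\<bar> * \<bar>f' \<tau>\<bar>"
      by (metis abs_ge_self abs_mult)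
    also have "\<dots> \<le> \<bar>f \<tau>\<bar> * (L * \<bar>f \<tau>\<bar>)"
      using assms(2)[OF \<open>\<tau> \<ge> 0\<close>] by (simp add: mult_left_mono)
    also have "\<dots> = L * (f \<tau>)\<^sup>2"
      by (simp add: power2_eq_square abs_mult_self_eq mult.left_commute)
    finally show "2 * (f \<tau> * f' \<tau> - L * (f \<tau>)\<^sup>2) * exp (-2 * L * \<tau>) \<le> 0"
      by (simp add: mult_nonpos_nonneg)
  qed fact
  then show ?thesis
    using assms(3) by (simp add: mult_le_0_iff)
qed

text \<open>The normalisation \<open>\<Sum>\<^sub>k\<^sub>\<noteq>\<^sub>l \<beta>(|y\<^sub>k - y\<^sub>l|\<^sup>2)\<close> of three points \<open>a, b, c\<close> on a line.\<close>

definition line_partition :: "(real \<Rightarrow> real) \<Rightarrow> real \<Rightarrow> real \<Rightarrow> real \<Rightarrow> real" where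
  "line_partition \<beta> a b c = 2 * (\<beta> ((a - b)\<^sup>2) + \<beta> ((a - c)\<^sup>2) + \<beta> ((b - c)\<^sup>2))"

definition pair_force :: "(real \<Rightarrow> real) \<Rightarrow> real \<Rightarrow> real \<Rightarrow> real \<Rightarrow> real" where
  "pair_force \<beta> P Z x = 4 * (P - \<beta> (x\<^sup>2) / Z) * x * deriv (\<lambda>x. ln (\<beta> x)) (x\<^sup>2)"

lemma pair_force_odd: "pair_force \<beta> P Z (- x) = - pair_force \<beta> P Z x"
  unfolding pair_force_def by simp

lemma pair_force_swap: "pair_force \<beta> P Z (y - x) = - pair_force \<beta> P Z (x - y)"
  using pair_force_odd[of \<beta> P Z "x - y"] by simp

lemma flow_rhs_three_points_on_line:
  fixes \<beta> :: "real \<Rightarrow> real" and Y :: "nat \<Rightarrow> nat \<Rightarrow> real"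
  defines "Z \<equiv> line_partition \<beta> (Y 1 1) (Y 2 1) (Y 3 1)"
  shows "flow_rhs \<beta> 1 3 p Y 1 1 = pair_force \<beta> (p 1 2) Z (Y 1 1 - Y 2 1) + pair_force \<beta> (p 1 3) Z (Y 1 1 - Y 3 1)"
    and "flow_rhs \<beta> 1 3 p Y 2 1 = pair_force \<beta> (p 2 1) Z (Y 2 1 - Y 1 1) + pair_force \<beta> (p 2 3) Z (Y 2 1 - Y 3 1)"
    and "flow_rhs \<beta> 1 3 p Y 3 1 = pair_force \<beta> (p 3 1) Z (Y 3 1 - Y 1 1) + pair_force \<beta> (p 3 2) Z (Y 3 1 - Y 2 1)"
proof -
  have partition: "(\<Sum>(k, l)\<in>pairs 3. \<beta> ((Y k 1 - Y l 1)\<^sup>2)) = Z"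
    unfolding Z_def line_partition_def sum_pairs_3 power2_commute[of "Y 2 1" "Y 1 1"]
      power2_commute[of "Y 3 1" "Y 1 1"] power2_commute[of "Y 3 1" "Y 2 1"] by simp
  have others: "{1..3::nat} - {1} = {2, 3}" "{1..3::nat} - {2} = {1, 3}" "{1..3::nat} - {3} = {1, 2}"
    by auto
  show "flow_rhs \<beta> 1 3 p Y 1 1 = pair_force \<beta> (p 1 2) Z (Y 1 1 - Y 2 1) + pair_force \<beta> (p 1 3) Z (Y 1 1 - Y 3 1)"
       "flow_rhs \<beta> 1 3 p Y 2 1 = pair_force \<beta> (p 2 1) Z (Y 2 1 - Y 1 1) + pair_force \<beta> (p 2 3) Z (Y 2 1 - Y 3 1)"
       "flow_rhs \<beta> 1 3 p Y 3 1 = pair_force \<beta> (p 3 1) Z (Y 3 1 - Y 1 1) + pair_force \<beta> (p 3 2) Z (Y 3 1 - Y 2 1)"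
    unfolding flow_rhs_def qaff_def sqd_1 partition others pair_force_def by (simp_all add: ring_distribs)
qed

lemma three_point_flow_has_derivative:
  fixes \<beta> :: "real \<Rightarrow> real" and Y :: "real \<Rightarrow> nat \<Rightarrow> nat \<Rightarrow> real"
  assumes "is_flow_solution \<beta> 1 3 p Y0 Y" "\<sigma> \<ge> 0"
  defines "Z \<equiv> line_partition \<beta> (Y \<sigma> 1 1) (Y \<sigma> 2 1) (Y \<sigma> 3 1)"
  shows "((\<lambda>t. Y t 1 1) has_real_derivative
            pair_force \<beta> (p 1 2) Z (Y \<sigma> 1 1 - Y \<sigma> 2 1) + pair_force \<beta> (p 1 3) Z (Y \<sigma> 1 1 - Y \<sigma> 3 1))
          (at \<sigma> within {0..})"
    and "((\<lambda>t. Y t 2 1) has_real_derivative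
            pair_force \<beta> (p 2 1) Z (Y \<sigma> 2 1 - Y \<sigma> 1 1) + pair_force \<beta> (p 2 3) Z (Y \<sigma> 2 1 - Y \<sigma> 3 1))
          (at \<sigma> within {0..})"
    and "((\<lambda>t. Y t 3 1) has_real_derivative
            pair_force \<beta> (p 3 1) Z (Y \<sigma> 3 1 - Y \<sigma> 1 1) + pair_force \<beta> (p 3 2) Z (Y \<sigma> 3 1 - Y \<sigma> 2 1))
          (at \<sigma> within {0..})"
proof -
  have "((\<lambda>t. Y t 1 1) has_real_derivative flow_rhs \<beta> 1 3 p (Y \<sigma>) 1 1) (at \<sigma> within {0..})"
    and "((\<lambda>t. Y t 2 1) has_real_derivative flow_rhs \<beta> 1 3 p (Y \<sigma>) 2 1) (at \<sigma> within {0..})"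
    and "((\<lambda>t. Y t 3 1) has_real_derivative flow_rhs \<beta> 1 3 p (Y \<sigma>) 3 1) (at \<sigma> within {0..})"
    using assms(1,2) unfolding is_flow_solution_def by auto
  then show "((\<lambda>t. Y t 1 1) has_real_derivative
            pair_force \<beta> (p 1 2) Z (Y \<sigma> 1 1 - Y \<sigma> 2 1) + pair_force \<beta> (p 1 3) Z (Y \<sigma> 1 1 - Y \<sigma> 3 1))
          (at \<sigma> within {0..})"
    and "((\<lambda>t. Y t 2 1) has_real_derivative
            pair_force \<beta> (p 2 1) Z (Y \<sigma> 2 1 - Y \<sigma> 1 1) + pair_force \<beta> (p 2 3) Z (Y \<sigma> 2 1 - Y \<sigma> 3 1))
          (at \<sigma> within {0..})"
    and "((\<lambda>t. Y t 3 1) has_real_derivative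
            pair_force \<beta> (p 3 1) Z (Y \<sigma> 3 1 - Y \<sigma> 1 1) + pair_force \<beta> (p 3 2) Z (Y \<sigma> 3 1 - Y \<sigma> 2 1))
          (at \<sigma> within {0..})"
    unfolding Z_def flow_rhs_three_points_on_line .
qed

lemma three_point_flow_initial:
  assumes "is_flow_solution \<beta> 1 3 p Y0 Y" "i \<in> {1..3}"
  shows "Y 0 i 1 = Y0 i 1"
  using assms unfolding is_flow_solution_def by auto

lemma three_point_flow_centre_fixed:
  assumes sol: "is_flow_solution \<beta> 1 3 p Y0 Y" and "sym_pos_prob 3 p" and "t \<ge> 0"
  shows "Y t 1 1 + Y t 2 1 + Y t 3 1 = Y0 1 1 + Y0 2 1 + Y0 3 1"
proof -
  have sum_deriv_0: "((\<lambda>\<tau>. Y \<tau> 1 1 + Y \<tau> 2 1 + Y \<tau> 3 1) has_real_derivative 0) (at \<sigma> within {0..})"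
    if "\<sigma> \<in> {0..}" for \<sigma>
  proof -
    have "\<sigma> \<ge> 0"
      using that by simp
    note d = three_point_flow_has_derivative[OF sol this]
    from DERIV_add[OF DERIV_add[OF d(1) d(2)] d(3)] show ?thesis
      unfolding sym_pos_prob_3_sym[OF \<open>sym_pos_prob 3 p\<close>]
        pair_force_swap[where x = "Y \<sigma> 1 1" and y = "Y \<sigma> 2 1"] pair_force_swap[where x = "Y \<sigma> 1 1" and y = "Y \<sigma> 3 1"]
        pair_force_swap[where x = "Y \<sigma> 2 1" and y = "Y \<sigma> 3 1"]
      by simp
  qed
  have "\<exists>k. \<forall>\<tau>\<in>{0..}. Y \<tau> 1 1 + Y \<tau> 2 1 + Y \<tau> 3 1 = k"
    by (rule has_field_derivative_zero_constant) (use sum_deriv_0 in auto)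
  then obtain k where "\<forall>\<tau>\<in>{0..}. Y \<tau> 1 1 + Y \<tau> 2 1 + Y \<tau> 3 1 = k"
    by blast
  then have "Y t 1 1 + Y t 2 1 + Y t 3 1 = Y 0 1 1 + Y 0 2 1 + Y 0 3 1"
    using \<open>t \<ge> 0\<close> by simp
  then show ?thesis
    using three_point_flow_initial[OF sol] by simp
qed

definition cauchy_kernel :: "real \<Rightarrow> real" where
  "cauchy_kernel x = 1 / (1 + x\<^sup>2)"

lemma cauchy_kernel_pos: "0 < cauchy_kernel x"
  unfolding cauchy_kernel_def by (simp add: add_pos_nonneg)

lemma cauchy_kernel_le_1: "cauchy_kernel x \<le> 1"
  unfolding cauchy_kernel_def by (simp add: add_pos_nonneg)

lemma cauchy_kernel_commute: "cauchy_kernel (y - x) = cauchy_kernel (x - y)"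
  unfolding cauchy_kernel_def by (simp add: power2_commute)

lemma abs_mult_cauchy_kernel_le: "\<bar>x\<bar> * cauchy_kernel x \<le> 1/2"
proof -
  have "2 * \<bar>x\<bar> \<le> 1 + x\<^sup>2"
    using zero_le_power2[of "\<bar>x\<bar> - 1"] by (simp add: power2_eq_square algebra_simps abs_mult_self_eq)
  then show ?thesis
    unfolding cauchy_kernel_def by (simp add: field_simps add_pos_nonneg)
qed

lemma power2_mult_cauchy_kernel_le: "x\<^sup>2 * cauchy_kernel x \<le> 1"
  unfolding cauchy_kernel_def by (simp add: field_simps add_pos_nonneg)

lemma cauchy_kernel_diff:
  "cauchy_kernel x - cauchy_kernel y = (y - x) * (y + x) * cauchy_kernel x * cauchy_kernel y"
proof -
  have "1 + x\<^sup>2 > 0" "1 + y\<^sup>2 > 0"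
    by (simp_all add: add_pos_nonneg)
  then show ?thesis
    unfolding cauchy_kernel_def by (simp add: field_simps power2_eq_square)
qed

lemma cauchy_kernel_mult_lipschitz:
  "\<bar>cauchy_kernel x * x - cauchy_kernel y * y\<bar> \<le> \<bar>x - y\<bar>"
proof -
  have "1 + x\<^sup>2 > 0" "1 + y\<^sup>2 > 0"
    by (simp_all add: add_pos_nonneg)
  then have factor: "cauchy_kernel x * x - cauchy_kernel y * y
      = (x - y) * ((1 - x * y) * cauchy_kernel x * cauchy_kernel y)"
    unfolding cauchy_kernel_def by (simp add: field_simps power2_eq_square)
  have "\<bar>1 - x * y\<bar> \<le> (1 + x\<^sup>2) * (1 + y\<^sup>2)"
  proof -
    have "2 * \<bar>x * y\<bar> \<le> x\<^sup>2 + y\<^sup>2"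
      using zero_le_power2[of "\<bar>x\<bar> - \<bar>y\<bar>"]
      by (simp add: power2_eq_square algebra_simps abs_mult abs_mult_self_eq)
    moreover have "(1 + x\<^sup>2) * (1 + y\<^sup>2) = 1 + x\<^sup>2 + y\<^sup>2 + x\<^sup>2 * y\<^sup>2"
      by (simp add: algebra_simps)
    moreover have "- \<bar>x * y\<bar> \<le> x * y" "x * y \<le> \<bar>x * y\<bar>" "0 \<le> x\<^sup>2 * y\<^sup>2"
      by auto
    ultimately show ?thesis
      unfolding abs_le_iff using zero_le_power2[of x] zero_le_power2[of y] by linarith
  qed
  then have "\<bar>(1 - x * y) * cauchy_kernel x * cauchy_kernel y\<bar> \<le> 1"
    unfolding cauchy_kernel_def by (simp add: abs_mult add_pos_nonneg divide_le_eq_1_pos)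
  then show ?thesis
    unfolding factor abs_mult by (simp add: mult_left_le)
qed

lemma cauchy_kernel_diff_bound:
  "\<bar>y * cauchy_kernel y * (cauchy_kernel x - cauchy_kernel y)\<bar> \<le> 5/4 * cauchy_kernel y * \<bar>x - y\<bar>"
proof -
  have "\<bar>y\<bar> * \<bar>y + x\<bar> * cauchy_kernel x * cauchy_kernel y
      \<le> (\<bar>x\<bar> * cauchy_kernel x) * (\<bar>y\<bar> * cauchy_kernel y) + (y\<^sup>2 * cauchy_kernel y) * cauchy_kernel x"
  proof -
    have "\<bar>y\<bar> * \<bar>y + x\<bar> \<le> \<bar>x\<bar> * \<bar>y\<bar> + y\<^sup>2"
      using mult_left_mono[OF abs_triangle_ineq[of y x], of "\<bar>y\<bar>"]
      by (simp add: power2_eq_square algebra_simps abs_mult_self_eq)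
    then show ?thesis
      using mult_right_mono[of _ _ "cauchy_kernel x * cauchy_kernel y"] cauchy_kernel_pos[of x] cauchy_kernel_pos[of y]
      by (fastforce simp: algebra_simps)
  qed
  also have "\<dots> \<le> 1/2 * (1/2) + 1 * 1"
    using abs_mult_cauchy_kernel_le[of x] abs_mult_cauchy_kernel_le[of y] power2_mult_cauchy_kernel_le[of y]
      cauchy_kernel_le_1[of x] cauchy_kernel_pos[of x] cauchy_kernel_pos[of y]
    by (intro add_mono mult_mono) auto
  finally have "\<bar>y\<bar> * \<bar>y + x\<bar> * cauchy_kernel x * cauchy_kernel y \<le> 5/4"
    by simp
  then have "cauchy_kernel y * \<bar>x - y\<bar> * (\<bar>y\<bar> * \<bar>y + x\<bar> * cauchy_kernel x * cauchy_kernel y)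
      \<le> cauchy_kernel y * \<bar>x - y\<bar> * (5/4)"
    using cauchy_kernel_pos[of y] by (intro mult_left_mono) auto
  moreover have "\<bar>y * cauchy_kernel y * (cauchy_kernel x - cauchy_kernel y)\<bar>
      = cauchy_kernel y * \<bar>x - y\<bar> * (\<bar>y\<bar> * \<bar>y + x\<bar> * cauchy_kernel x * cauchy_kernel y)"
    unfolding cauchy_kernel_diff using cauchy_kernel_pos[of x] cauchy_kernel_pos[of y]
    by (simp add: abs_mult abs_minus_commute mult_ac)
  ultimately show ?thesis
    by (simp add: mult_ac)
qed

lemma deriv_ln_cauchy:
  assumes "(d::real) \<ge> 0"
  shows "deriv (\<lambda>x. ln (1 / (1 + x))) d = - 1 / (1 + d)"
proof (rule DERIV_imp_deriv)
  have "((\<lambda>x. - ln (1 + x)) has_real_derivative - 1 / (1 + d)) (at d)"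
    using assms by (auto intro!: derivative_eq_intros)
  then show "((\<lambda>x. ln (1 / (1 + x))) has_real_derivative - 1 / (1 + d)) (at d)"
    by (rule has_field_derivative_transform_within_open[where S = "{-1<..}"])
      (use assms in \<open>auto simp: ln_div\<close>)
qed

lemma pair_force_cauchy:
  "pair_force (\<lambda>x. 1 / (1 + x)) P Z x = 4 * (cauchy_kernel x / Z - P) * cauchy_kernel x * x"
  unfolding pair_force_def deriv_ln_cauchy[OF zero_le_power2] cauchy_kernel_def
  by (simp add: algebra_simps)

lemma line_partition_cauchy:
  "line_partition (\<lambda>x. 1 / (1 + x)) a b c
     = 2 * (cauchy_kernel (a - b) + cauchy_kernel (a - c) + cauchy_kernel (b - c))"
  unfolding line_partition_def cauchy_kernel_def ..

lemma pair_force_cauchy_lipschitz: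
  fixes x y P Z :: real
  defines "F \<equiv> pair_force (\<lambda>x. 1 / (1 + x)) P Z"
  assumes "2 * cauchy_kernel x \<le> Z" "2 * cauchy_kernel y \<le> Z" "0 \<le> P" "P \<le> 1"
  shows "\<bar>F x - F y\<bar> \<le> 12 * \<bar>x - y\<bar>"
proof -
  have "0 < Z"
    using cauchy_kernel_pos[of x] assms(2) by linarith
  define Gx where "Gx = cauchy_kernel x * x"
  define Gy where "Gy = cauchy_kernel y * y"
  have G: "\<bar>Gx - Gy\<bar> \<le> \<bar>x - y\<bar>"
    unfolding Gx_def Gy_def by (rule cauchy_kernel_mult_lipschitz)
  define A where "A = cauchy_kernel x / Z * (Gx - Gy)"
  define B where "B = y * cauchy_kernel y * (cauchy_kernel x - cauchy_kernel y) / Z"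
  define C where "C = P * (Gx - Gy)"
  have "\<bar>A\<bar> \<le> 1/2 * \<bar>x - y\<bar>"
    unfolding A_def abs_mult using \<open>0 < Z\<close> assms(2) cauchy_kernel_pos[of x] G
    by (intro mult_mono) (auto simp: divide_le_eq)
  moreover have "\<bar>B\<bar> \<le> 5/8 * \<bar>x - y\<bar>"
  proof -
    have "\<bar>B\<bar> \<le> 5/4 * \<bar>x - y\<bar> * (cauchy_kernel y / Z)"
      unfolding B_def using cauchy_kernel_diff_bound[of y x] \<open>0 < Z\<close>
      by (simp add: divide_right_mono field_simps)
    also have "\<dots> \<le> 5/4 * \<bar>x - y\<bar> * (1/2)"
      using \<open>0 < Z\<close> assms(3) by (intro mult_left_mono) (auto simp: divide_le_eq)
    finally show ?thesis
      by simp
  qed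
  moreover have "\<bar>C\<bar> \<le> 1 * \<bar>x - y\<bar>"
    unfolding C_def abs_mult using assms(4,5) G by (intro mult_mono) auto
  moreover have "F x - F y = 4 * (A + B - C)"
    unfolding F_def pair_force_cauchy A_def B_def C_def Gx_def Gy_def
    by (simp add: algebra_simps diff_divide_distrib)
  then have "\<bar>F x - F y\<bar> = 4 * \<bar>A + B - C\<bar>"
    by (simp only: abs_mult abs_numeral)
  moreover have "\<bar>A + B - C\<bar> \<le> \<bar>A\<bar> + \<bar>B\<bar> + \<bar>C\<bar>"
    by arith
  ultimately show ?thesis
    using abs_ge_zero[of "x - y"] by linarith
qed

lemma cauchy_three_point_middle_fixed:
  assumes sol: "is_flow_solution (\<lambda>x. 1 / (1 + x)) 1 3 p Y0 Y"
    and p: "sym_pos_prob 3 p" "p 2 1 = p 2 3"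
    and Y0: "Y0 1 1 + Y0 2 1 + Y0 3 1 = 0" "Y0 2 1 = 0" and "t \<ge> 0"
  shows "Y t 2 1 = 0"
proof -
  define F where "F = pair_force (\<lambda>x. 1 / (1 + x)) (p 2 1)"
  define Z where "Z \<sigma> = line_partition (\<lambda>x. 1 / (1 + x)) (Y \<sigma> 1 1) (Y \<sigma> 2 1) (Y \<sigma> 3 1)" for \<sigma>
  define V where "V \<sigma> = F (Z \<sigma>) (Y \<sigma> 2 1 - Y \<sigma> 1 1) - F (Z \<sigma>) (Y \<sigma> 3 1 - Y \<sigma> 2 1)" for \<sigma>
  show ?thesis
  proof (rule zero_if_derivative_linearly_bounded[where f = "\<lambda>\<sigma>. Y \<sigma> 2 1" and f' = V and L = 36])
    fix \<sigma> :: real assume "\<sigma> \<ge> 0"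
    show "((\<lambda>\<sigma>. Y \<sigma> 2 1) has_real_derivative V \<sigma>) (at \<sigma> within {0..})"
      using three_point_flow_has_derivative(2)[OF sol \<open>\<sigma> \<ge> 0\<close>]
      unfolding V_def F_def Z_def p(2) pair_force_swap[where x = "Y \<sigma> 2 1" and y = "Y \<sigma> 3 1"] by simp
    have "Y \<sigma> 1 1 + Y \<sigma> 2 1 + Y \<sigma> 3 1 = 0"
      using three_point_flow_centre_fixed[OF sol p(1) \<open>\<sigma> \<ge> 0\<close>] Y0(1) by simp
    then have "(Y \<sigma> 2 1 - Y \<sigma> 1 1) - (Y \<sigma> 3 1 - Y \<sigma> 2 1) = 3 * Y \<sigma> 2 1"
      by simp
    moreover have "\<bar>V \<sigma>\<bar> \<le> 12 * \<bar>(Y \<sigma> 2 1 - Y \<sigma> 1 1) - (Y \<sigma> 3 1 - Y \<sigma> 2 1)\<bar>"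
      unfolding V_def F_def
    proof (rule pair_force_cauchy_lipschitz)
      show "2 * cauchy_kernel (Y \<sigma> 2 1 - Y \<sigma> 1 1) \<le> Z \<sigma>" "2 * cauchy_kernel (Y \<sigma> 3 1 - Y \<sigma> 2 1) \<le> Z \<sigma>"
        using cauchy_kernel_pos[of "Y \<sigma> 1 1 - Y \<sigma> 2 1"] cauchy_kernel_pos[of "Y \<sigma> 1 1 - Y \<sigma> 3 1"]
          cauchy_kernel_pos[of "Y \<sigma> 2 1 - Y \<sigma> 3 1"]
        unfolding Z_def line_partition_cauchy cauchy_kernel_commute[where x = "Y \<sigma> 1 1" and y = "Y \<sigma> 2 1"]
          cauchy_kernel_commute[where x = "Y \<sigma> 2 1" and y = "Y \<sigma> 3 1"]
        by simp_all
      show "0 \<le> p 2 1" "p 2 1 \<le> 1"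
        using sym_pos_prob_3_bounds[OF p(1), of 2 1] by (auto simp: pairs_def)
    qed
    ultimately show "\<bar>V \<sigma>\<bar> \<le> 36 * \<bar>Y \<sigma> 2 1\<bar>"
      by (simp add: abs_mult)
  qed (use three_point_flow_initial[OF sol] Y0(2) \<open>t \<ge> 0\<close> in auto)
qed

lemma cauchy_kernel_double:
  "2 * cauchy_kernel (2 * x) - cauchy_kernel x / 2 = 3/2 * cauchy_kernel x * cauchy_kernel (2 * x)"
  "cauchy_kernel x \<le> 4 * cauchy_kernel (2 * x)"
proof -
  have pos: "1 + x\<^sup>2 > 0" "1 + 4 * x\<^sup>2 > 0"
    by (simp_all add: add_pos_nonneg)
  show "2 * cauchy_kernel (2 * x) - cauchy_kernel x / 2 = 3/2 * cauchy_kernel x * cauchy_kernel (2 * x)"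
    "cauchy_kernel x \<le> 4 * cauchy_kernel (2 * x)"
    unfolding cauchy_kernel_def using pos by (simp_all add: field_simps power2_eq_square)
qed

lemma cauchy_outer_velocity_bound:
  fixes x :: real
  defines "F \<equiv> pair_force (\<lambda>x. 1 / (1 + x))" and "Z \<equiv> line_partition (\<lambda>x. 1 / (1 + x)) (- x) 0 x"
  shows "x\<^sup>2 * cauchy_kernel x * cauchy_kernel (2 * x) / 6 \<le> x * (F (1/50) Z (2 * x) + F (6/25) Z x)"
proof -
  define U1 where "U1 = cauchy_kernel x"
  define U2 where "U2 = cauchy_kernel (2 * x)"
  have "0 < U1" "0 < U2"
    unfolding U1_def U2_def by (simp_all add: cauchy_kernel_pos)
  have "cauchy_kernel (- x - 0) = U1" "cauchy_kernel (0 - x) = U1" "cauchy_kernel (- x - x) = U2"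
    unfolding U1_def U2_def cauchy_kernel_def by (simp_all add: power2_eq_square algebra_simps)
  then have Z: "Z = 4 * U1 + 2 * U2"
    unfolding Z_def line_partition_cauchy by simp
  define q where "q = U2 / Z"
  have q1: "U1 / Z = (1 - 2 * q) / 4"
    unfolding q_def using Z \<open>0 < U1\<close> \<open>0 < U2\<close> by (simp add: field_simps)
  txt \<open>\<open>q\<close> is the weight \<open>q\<^sub>1\<^sub>3\<close> of the outer pair, and \<open>q \<ge> 1/18 > p\<^sub>1\<^sub>3\<close> makes that pair repel.\<close>
  have "1/18 \<le> q"
    unfolding q_def using Z cauchy_kernel_double(2)[of x] \<open>0 < U1\<close> \<open>0 < U2\<close>
    by (simp add: U1_def U2_def field_simps)
  have "x * (F (1/50) Z (2 * x) + F (6/25) Z x)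
      = 4 * x\<^sup>2 * ((q - 1/50) * (2 * U2) + ((1 - 2 * q) / 4 - 6/25) * U1)"
    unfolding F_def pair_force_cauchy U1_def[symmetric] U2_def[symmetric] q_def[symmetric] q1
    by (simp add: power2_eq_square field_simps)
  also have "\<dots> = 4 * x\<^sup>2 * (q - 1/50) * (2 * U2 - U1 / 2)"
    by (simp add: field_simps)
  also have "\<dots> = 6 * x\<^sup>2 * (q - 1/50) * U1 * U2"
    unfolding U1_def U2_def cauchy_kernel_double(1) by simp
  also have "\<dots> \<ge> 6 * x\<^sup>2 * (1/18 - 1/50) * U1 * U2"
    using \<open>1/18 \<le> q\<close> \<open>0 < U1\<close> \<open>0 < U2\<close> by (intro mult_right_mono mult_left_mono) auto
  also have "6 * x\<^sup>2 * (1/18 - 1/50) * U1 * U2 \<ge> x\<^sup>2 * U1 * U2 / 6"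
    using \<open>0 < U1\<close> \<open>0 < U2\<close> by simp
  finally show ?thesis
    unfolding U1_def U2_def .
qed

lemma cauchy_kernel_quartic_bound:
  assumes "1 \<le> x\<^sup>2"
  shows "1/10 \<le> x ^ 4 * cauchy_kernel x * cauchy_kernel (2 * x)"
proof -
  have "(1 + x\<^sup>2) * (1 + 4 * x\<^sup>2) \<le> 10 * x ^ 4"
    using mult_nonneg_nonneg[of "6 * x\<^sup>2 + 1" "x\<^sup>2 - 1"] assms
    by (simp add: algebra_simps power2_eq_square power4_eq_xxxx)
  moreover have "0 < (1 + x\<^sup>2) * (1 + 4 * x\<^sup>2)"
    by (simp add: add_pos_nonneg)
  ultimately show ?thesis
    unfolding cauchy_kernel_def by (simp add: power2_eq_square le_divide_eq)
qed

lemma quartic_growth_of_cauchy_drift: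
  fixes c K :: "real \<Rightarrow> real"
  assumes deriv: "\<And>t. t \<ge> 0 \<Longrightarrow> (c has_real_derivative K t) (at t within {0..})"
    and drift: "\<And>t. t \<ge> 0 \<Longrightarrow> (c t)\<^sup>2 * cauchy_kernel (c t) * cauchy_kernel (2 * c t) / 6 \<le> c t * K t"
    and "c 0 = 1" and "t \<ge> 0"
  shows "1 + t / 15 \<le> c t ^ 4"
proof -
  have outward: "0 \<le> c t * K t" if "t \<ge> 0" for t
  proof -
    have "0 \<le> (c t)\<^sup>2 * cauchy_kernel (c t) * cauchy_kernel (2 * c t) / 6"
      using cauchy_kernel_pos[of "c t"] cauchy_kernel_pos[of "2 * c t"] by simp
    then show ?thesis
      using drift[OF that] by linarith
  qed
  have far: "1 \<le> (c t)\<^sup>2" if "t \<ge> 0" for t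
  proof -
    have "- (c t)\<^sup>2 \<le> - (c 0)\<^sup>2"
    proof (rule nonincreasing_from_0[where f = "\<lambda>t. - (c t)\<^sup>2" and f' = "\<lambda>t. - 2 * (c t * K t)"])
      show "((\<lambda>t. - (c t)\<^sup>2) has_real_derivative - 2 * (c s * K s)) (at s within {0..})" if "s \<ge> 0" for s
        using deriv[OF that] by (auto intro!: derivative_eq_intros simp: algebra_simps)
      show "- 2 * (c s * K s) \<le> 0" if "s \<ge> 0" for s
        using outward[OF that] by simp
    qed fact
    then show ?thesis
      using \<open>c 0 = 1\<close> by simp
  qed
  have "t / 15 - c t ^ 4 \<le> 0 / 15 - c 0 ^ 4"
  proof (rule nonincreasing_from_0[where f = "\<lambda>t. t / 15 - c t ^ 4" and f' = "\<lambda>t. 1/15 - 4 * (c t)\<^sup>2 * (c t * K t)"])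
    show "((\<lambda>t. t / 15 - c t ^ 4) has_real_derivative 1/15 - 4 * (c s)\<^sup>2 * (c s * K s)) (at s within {0..})"
      if "s \<ge> 0" for s
      using deriv[OF that]
      by (auto intro!: derivative_eq_intros simp: algebra_simps power2_eq_square power3_eq_cube)
    show "1/15 - 4 * (c s)\<^sup>2 * (c s * K s) \<le> 0" if "s \<ge> 0" for s
    proof -
      have "4 * (c s)\<^sup>2 * ((c s)\<^sup>2 * cauchy_kernel (c s) * cauchy_kernel (2 * c s) / 6) \<le> 4 * (c s)\<^sup>2 * (c s * K s)"
        using drift[OF that] by (intro mult_left_mono) auto
      moreover have "1/10 \<le> c s ^ 4 * cauchy_kernel (c s) * cauchy_kernel (2 * c s)"
        using cauchy_kernel_quartic_bound far[OF that] by blast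
      ultimately show ?thesis
        by (simp add: power2_eq_square power4_eq_xxxx mult_ac)
    qed
  qed fact
  then show ?thesis
    using \<open>c 0 = 1\<close> by simp
qed

definition example_p :: "nat \<Rightarrow> nat \<Rightarrow> real" where
  "example_p i j = (if (i = 1 \<and> j = 3) \<or> (i = 3 \<and> j = 1) then 1/50 else 6/25)"

definition example_Y0 :: "nat \<Rightarrow> nat \<Rightarrow> real" where
  "example_Y0 i k = real i - 2"

lemma sym_pos_prob_example: "sym_pos_prob 3 example_p"
  unfolding sym_pos_prob_def sum_pairs_3 by (auto simp: example_p_def)

lemma cauchy_example_diam_growth:
  assumes sol: "is_flow_solution (\<lambda>x. 1 / (1 + x)) 1 3 example_p example_Y0 Y" and "t \<ge> 0"
  shows "t powr (1/4) \<le> diam_conf 1 3 (Y t)"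
proof -
  have middle: "Y \<sigma> 2 1 = 0" if "\<sigma> \<ge> 0" for \<sigma>
    using cauchy_three_point_middle_fixed[OF sol sym_pos_prob_example _ _ _ that]
    by (simp add: example_p_def example_Y0_def)
  have centre: "Y \<sigma> 1 1 = - Y \<sigma> 3 1" if "\<sigma> \<ge> 0" for \<sigma>
    using three_point_flow_centre_fixed[OF sol sym_pos_prob_example that] middle[OF that]
    by (simp add: example_Y0_def)
  define F where "F = pair_force (\<lambda>x. 1 / (1 + x))"
  define K where "K \<sigma> = F (1/50) (line_partition (\<lambda>x. 1 / (1 + x)) (- Y \<sigma> 3 1) 0 (Y \<sigma> 3 1)) (2 * Y \<sigma> 3 1)
    + F (6/25) (line_partition (\<lambda>x. 1 / (1 + x)) (- Y \<sigma> 3 1) 0 (Y \<sigma> 3 1)) (Y \<sigma> 3 1)" for \<sigma>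
  have "1 + t / 15 \<le> Y t 3 1 ^ 4"
  proof (rule quartic_growth_of_cauchy_drift[where K = K])
    show "((\<lambda>\<sigma>. Y \<sigma> 3 1) has_real_derivative K \<sigma>) (at \<sigma> within {0..})" if "\<sigma> \<ge> 0" for \<sigma>
    proof -
      have simplify: "Y \<sigma> 3 1 - - Y \<sigma> 3 1 = 2 * Y \<sigma> 3 1" "Y \<sigma> 3 1 - 0 = Y \<sigma> 3 1"
        "example_p 3 1 = 1/50" "example_p 3 2 = 6/25"
        by (simp_all add: example_p_def)
      show ?thesis
        using three_point_flow_has_derivative(3)[OF sol that]
        unfolding centre[OF that] middle[OF that] simplify K_def F_def .
    qed
    show "(Y \<sigma> 3 1)\<^sup>2 * cauchy_kernel (Y \<sigma> 3 1) * cauchy_kernel (2 * Y \<sigma> 3 1) / 6 \<le> Y \<sigma> 3 1 * K \<sigma>" for \<sigma>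
      unfolding K_def F_def by (rule cauchy_outer_velocity_bound)
  qed (use three_point_flow_initial[OF sol] \<open>t \<ge> 0\<close> in \<open>auto simp: example_Y0_def\<close>)
  then have "t \<le> (2 * \<bar>Y t 3 1\<bar>) ^ 4"
    using \<open>t \<ge> 0\<close> by (simp add: power_mult_distrib)
  then have "t powr (1/4) \<le> 2 * \<bar>Y t 3 1\<bar>"
    by (intro powr_quarter_le \<open>t \<ge> 0\<close>) auto
  also have "2 * \<bar>Y t 3 1\<bar> = \<bar>Y t 3 1 - Y t 1 1\<bar>"
    using centre[OF \<open>t \<ge> 0\<close>] by simp
  also have "\<dots> \<le> diam_conf 1 3 (Y t)"
    by (rule diam_conf_1_ge_dist) auto
  finally show ?thesis .
qed

lemma deriv_ln_gauss: "deriv (\<lambda>x. ln (exp (- x))) (d::real) = - 1"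
proof -
  have "deriv (\<lambda>x::real. - x) d = - 1"
    by (rule DERIV_imp_deriv) (auto intro!: derivative_eq_intros)
  then show ?thesis
    by simp
qed

lemma pair_force_gauss: "pair_force (\<lambda>x. exp (- x)) P Z x = 4 * (exp (- x\<^sup>2) / Z - P) * x"
  unfolding pair_force_def deriv_ln_gauss by (simp add: algebra_simps)

lemma line_partition_gauss_pos: "0 < line_partition (\<lambda>x. exp (- x)) a b c"
  unfolding line_partition_def by (simp add: add_pos_pos)

text \<open>Up to the constant \<open>\<Sum> p\<^sub>i\<^sub>j ln p\<^sub>i\<^sub>j\<close>, the relative entropy of three points \<open>a, b, c\<close> on a line.\<close>

definition gauss_energy :: "real \<Rightarrow> real \<Rightarrow> real \<Rightarrow> real \<Rightarrow> real \<Rightarrow> real \<Rightarrow> real" where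
  "gauss_energy P Q R a b c = 2 * (P * (a - b)\<^sup>2 + Q * (a - c)\<^sup>2 + R * (b - c)\<^sup>2)
     + ln (line_partition (\<lambda>x. exp (- x)) a b c)"

lemma gauss_energy_has_derivative:
  fixes a b c :: "real \<Rightarrow> real"
  assumes "(a has_real_derivative A) (at \<sigma> within S)" "(b has_real_derivative B) (at \<sigma> within S)"
    "(c has_real_derivative C) (at \<sigma> within S)"
  defines "F \<equiv> \<lambda>P. pair_force (\<lambda>x. exp (- x)) P (line_partition (\<lambda>x. exp (- x)) (a \<sigma>) (b \<sigma>) (c \<sigma>))"
  shows "((\<lambda>\<tau>. gauss_energy P Q R (a \<tau>) (b \<tau>) (c \<tau>)) has_real_derivative
      - (F P (a \<sigma> - b \<sigma>) * (A - B) + F Q (a \<sigma> - c \<sigma>) * (A - C) + F R (b \<sigma> - c \<sigma>) * (B - C)))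
    (at \<sigma> within S)"
proof -
  define Z where "Z = line_partition (\<lambda>x. exp (- x)) (a \<sigma>) (b \<sigma>) (c \<sigma>)"
  have "0 < Z"
    unfolding Z_def by (rule line_partition_gauss_pos)
  have sq: "((\<lambda>\<tau>. (u \<tau> - v \<tau>)\<^sup>2) has_real_derivative 2 * (u \<sigma> - v \<sigma>) * (U - V)) (at \<sigma> within S)"
    if "(u has_real_derivative U) (at \<sigma> within S)" "(v has_real_derivative V) (at \<sigma> within S)"
    for u v :: "real \<Rightarrow> real" and U V
    using that by (auto intro!: derivative_eq_intros)
  have kernel: "((\<lambda>\<tau>. exp (- (u \<tau> - v \<tau>)\<^sup>2)) has_real_derivative
      exp (- (u \<sigma> - v \<sigma>)\<^sup>2) * - (2 * (u \<sigma> - v \<sigma>) * (U - V))) (at \<sigma> within S)"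
    if "(u has_real_derivative U) (at \<sigma> within S)" "(v has_real_derivative V) (at \<sigma> within S)"
    for u v :: "real \<Rightarrow> real" and U V
    by (rule DERIV_chain'[OF DERIV_minus[OF sq[OF that]] DERIV_exp])
  have quadratic: "((\<lambda>\<tau>. 2 * (P * (a \<tau> - b \<tau>)\<^sup>2 + Q * (a \<tau> - c \<tau>)\<^sup>2 + R * (b \<tau> - c \<tau>)\<^sup>2))
      has_real_derivative 2 * (P * (2 * (a \<sigma> - b \<sigma>) * (A - B)) + Q * (2 * (a \<sigma> - c \<sigma>) * (A - C))
        + R * (2 * (b \<sigma> - c \<sigma>) * (B - C)))) (at \<sigma> within S)"
    by (intro DERIV_cmult DERIV_add sq assms)
  have partition: "((\<lambda>\<tau>. line_partition (\<lambda>x. exp (- x)) (a \<tau>) (b \<tau>) (c \<tau>)) has_real_derivative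
      2 * (exp (- (a \<sigma> - b \<sigma>)\<^sup>2) * - (2 * (a \<sigma> - b \<sigma>) * (A - B))
        + exp (- (a \<sigma> - c \<sigma>)\<^sup>2) * - (2 * (a \<sigma> - c \<sigma>) * (A - C))
        + exp (- (b \<sigma> - c \<sigma>)\<^sup>2) * - (2 * (b \<sigma> - c \<sigma>) * (B - C)))) (at \<sigma> within S)"
    unfolding line_partition_def by (intro DERIV_cmult DERIV_add kernel assms)
  have "2 * (P * (2 * (a \<sigma> - b \<sigma>) * (A - B)) + Q * (2 * (a \<sigma> - c \<sigma>) * (A - C))
        + R * (2 * (b \<sigma> - c \<sigma>) * (B - C)))
      + 1 / Z * (2 * (exp (- (a \<sigma> - b \<sigma>)\<^sup>2) * - (2 * (a \<sigma> - b \<sigma>) * (A - B))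
        + exp (- (a \<sigma> - c \<sigma>)\<^sup>2) * - (2 * (a \<sigma> - c \<sigma>) * (A - C))
        + exp (- (b \<sigma> - c \<sigma>)\<^sup>2) * - (2 * (b \<sigma> - c \<sigma>) * (B - C))))
    = - (F P (a \<sigma> - b \<sigma>) * (A - B) + F Q (a \<sigma> - c \<sigma>) * (A - C) + F R (b \<sigma> - c \<sigma>) * (B - C))"
    unfolding F_def Z_def[symmetric] pair_force_gauss using \<open>0 < Z\<close> by (simp add: field_simps)
  with DERIV_add[OF quadratic DERIV_chain'[OF partition DERIV_ln_divide[OF \<open>0 < Z\<close>[unfolded Z_def]]]]
  show ?thesis
    unfolding gauss_energy_def Z_def by simp
qed

lemma gauss_energy_nonincreasing:
  assumes sol: "is_flow_solution (\<lambda>x. exp (- x)) 1 3 p Y0 Y" and p: "sym_pos_prob 3 p" and "t \<ge> 0"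
  shows "gauss_energy (p 1 2) (p 1 3) (p 2 3) (Y t 1 1) (Y t 2 1) (Y t 3 1)
       \<le> gauss_energy (p 1 2) (p 1 3) (p 2 3) (Y0 1 1) (Y0 2 1) (Y0 3 1)"
proof -
  define Z where "Z \<sigma> = line_partition (\<lambda>x. exp (- x)) (Y \<sigma> 1 1) (Y \<sigma> 2 1) (Y \<sigma> 3 1)" for \<sigma>
  define f where "f \<sigma> = pair_force (\<lambda>x. exp (- x)) (p 1 2) (Z \<sigma>) (Y \<sigma> 1 1 - Y \<sigma> 2 1)" for \<sigma>
  define g where "g \<sigma> = pair_force (\<lambda>x. exp (- x)) (p 1 3) (Z \<sigma>) (Y \<sigma> 1 1 - Y \<sigma> 3 1)" for \<sigma>
  define h where "h \<sigma> = pair_force (\<lambda>x. exp (- x)) (p 2 3) (Z \<sigma>) (Y \<sigma> 2 1 - Y \<sigma> 3 1)" for \<sigma>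
  have velocity: "((\<lambda>\<tau>. Y \<tau> 1 1) has_real_derivative f \<sigma> + g \<sigma>) (at \<sigma> within {0..})"
    "((\<lambda>\<tau>. Y \<tau> 2 1) has_real_derivative - f \<sigma> + h \<sigma>) (at \<sigma> within {0..})"
    "((\<lambda>\<tau>. Y \<tau> 3 1) has_real_derivative - g \<sigma> + - h \<sigma>) (at \<sigma> within {0..})"
    if "\<sigma> \<ge> 0" for \<sigma>
    using three_point_flow_has_derivative[OF sol that]
    unfolding f_def g_def h_def Z_def sym_pos_prob_3_sym[OF p]
      pair_force_swap[where x = "Y \<sigma> 1 1" and y = "Y \<sigma> 2 1"] pair_force_swap[where x = "Y \<sigma> 1 1" and y = "Y \<sigma> 3 1"]
      pair_force_swap[where x = "Y \<sigma> 2 1" and y = "Y \<sigma> 3 1"] .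
  have "gauss_energy (p 1 2) (p 1 3) (p 2 3) (Y t 1 1) (Y t 2 1) (Y t 3 1)
      \<le> gauss_energy (p 1 2) (p 1 3) (p 2 3) (Y 0 1 1) (Y 0 2 1) (Y 0 3 1)"
  proof (rule nonincreasing_from_0[where f' = "\<lambda>\<sigma>. - ((f \<sigma> + g \<sigma>)\<^sup>2 + (- f \<sigma> + h \<sigma>)\<^sup>2 + (- g \<sigma> + - h \<sigma>)\<^sup>2)"])
    fix \<sigma> :: real assume "\<sigma> \<ge> 0"
    txt \<open>As along any gradient flow, the energy decreases at the rate \<open>|Y'|\<^sup>2\<close>.\<close>
    have "- (f \<sigma> * ((f \<sigma> + g \<sigma>) - (- f \<sigma> + h \<sigma>)) + g \<sigma> * ((f \<sigma> + g \<sigma>) - (- g \<sigma> + - h \<sigma>))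
        + h \<sigma> * ((- f \<sigma> + h \<sigma>) - (- g \<sigma> + - h \<sigma>)))
      = - ((f \<sigma> + g \<sigma>)\<^sup>2 + (- f \<sigma> + h \<sigma>)\<^sup>2 + (- g \<sigma> + - h \<sigma>)\<^sup>2)"
      by (simp add: power2_eq_square algebra_simps)
    with gauss_energy_has_derivative[OF velocity[OF \<open>\<sigma> \<ge> 0\<close>], of "p 1 2" "p 1 3" "p 2 3"]
    show "((\<lambda>\<tau>. gauss_energy (p 1 2) (p 1 3) (p 2 3) (Y \<tau> 1 1) (Y \<tau> 2 1) (Y \<tau> 3 1)) has_real_derivative
        - ((f \<sigma> + g \<sigma>)\<^sup>2 + (- f \<sigma> + h \<sigma>)\<^sup>2 + (- g \<sigma> + - h \<sigma>)\<^sup>2)) (at \<sigma> within {0..})"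
      unfolding f_def g_def h_def Z_def by simp
    show "- ((f \<sigma> + g \<sigma>)\<^sup>2 + (- f \<sigma> + h \<sigma>)\<^sup>2 + (- g \<sigma> + - h \<sigma>)\<^sup>2) \<le> 0"
      using zero_le_power2[of "f \<sigma> + g \<sigma>"] zero_le_power2[of "- f \<sigma> + h \<sigma>"]
        zero_le_power2[of "- g \<sigma> + - h \<sigma>"] by linarith
  qed fact
  moreover have "Y 0 1 1 = Y0 1 1" "Y 0 2 1 = Y0 2 1" "Y 0 3 1 = Y0 3 1"
    using three_point_flow_initial[OF sol, of 1] three_point_flow_initial[OF sol, of 2]
      three_point_flow_initial[OF sol, of 3] by simp_all
  ultimately show ?thesis
    by simp
qed

lemma exp_estimate: "4 * exp (-1) + 2 * exp (-4) < 6 * exp (- (113/100::real))"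
proof -
  have "exp (13/100::real) \<le> 100/87"
  proof -
    have "87/100 \<le> exp (- (13/100::real))"
      using exp_ge_add_one_self[of "- (13/100)"] by simp
    then show ?thesis
      by (simp add: exp_minus field_simps)
  qed
  moreover have "exp (- (287/100::real)) \<le> 100/387"
  proof -
    have "387/100 \<le> exp (287/100::real)"
      using exp_ge_add_one_self[of "287/100"] by simp
    then show ?thesis
      by (simp add: exp_minus field_simps)
  qed
  ultimately have "exp (- (113/100)) * (4 * exp (13/100::real) + 2 * exp (- (287/100))) < exp (- (113/100)) * 6"
    by (intro mult_strict_left_mono) auto
  then show ?thesis
    by (simp add: algebra_simps flip: exp_add)
qed

lemma gauss_energy_example_initial: "gauss_energy (6/25) (1/50) (6/25) (- 1) 0 1 < ln 6 - 1/100"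
proof -
  have "ln (4 * exp (- 1) + 2 * exp (- 4)) < ln (6 * exp (- (113/100::real)))"
    using exp_estimate by (subst ln_less_cancel_iff) (auto simp: add_pos_pos)
  then show ?thesis
    unfolding gauss_energy_def line_partition_def by (simp add: ln_mult algebra_simps)
qed

lemma gauss_energy_gt_if_close:
  assumes "0 \<le> P" "0 \<le> Q" "0 \<le> R" "\<bar>a - b\<bar> < 1/10" "\<bar>a - c\<bar> < 1/10" "\<bar>b - c\<bar> < 1/10"
  shows "ln 6 - 1/100 < gauss_energy P Q R a b c"
proof -
  define e where "e = exp (- (1/100) :: real)"
  have near: "e < exp (- x\<^sup>2)" if "\<bar>x\<bar> < 1/10" for x :: real
  proof -
    have "\<bar>x\<bar>\<^sup>2 < (1/10)\<^sup>2"
      using that by (intro power_strict_mono) auto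
    then show ?thesis
      unfolding e_def by (simp add: power2_eq_square)
  qed
  have "6 * e < line_partition (\<lambda>x. exp (- x)) a b c"
    using near[OF assms(4)] near[OF assms(5)] near[OF assms(6)] unfolding line_partition_def
    by simp
  then have "ln (6 * e) < ln (line_partition (\<lambda>x. exp (- x)) a b c)"
    by (rule ln_strict_mono) (simp add: e_def)
  moreover have "ln (6 * e) = ln 6 - 1/100"
    unfolding e_def by (simp add: ln_mult)
  moreover have "0 \<le> 2 * (P * (a - b)\<^sup>2 + Q * (a - c)\<^sup>2 + R * (b - c)\<^sup>2)"
    using assms(1-3) by simp
  ultimately show ?thesis
    unfolding gauss_energy_def by linarith
qed

lemma gauss_example_diam_bound:
  assumes sol: "is_flow_solution (\<lambda>x. exp (- x)) 1 3 example_p example_Y0 Y" and "t \<ge> 0"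
  shows "1/10 \<le> diam_conf 1 3 (Y t)"
proof (rule ccontr)
  assume "\<not> 1/10 \<le> diam_conf 1 3 (Y t)"
  then have close: "\<bar>Y t i 1 - Y t j 1\<bar> < 1/10" if "i \<in> {1..3}" "j \<in> {1..3}" for i j
    using diam_conf_1_ge_dist[OF that, of "Y t"] by linarith
  have example_values: "example_p 1 2 = 6/25" "example_p 1 3 = 1/50" "example_p 2 3 = 6/25"
    "example_Y0 1 1 = - 1" "example_Y0 2 1 = 0" "example_Y0 3 1 = 1"
    by (simp_all add: example_p_def example_Y0_def)
  have "ln 6 - 1/100 < gauss_energy (example_p 1 2) (example_p 1 3) (example_p 2 3) (Y t 1 1) (Y t 2 1) (Y t 3 1)"
    unfolding example_values
    by (rule gauss_energy_gt_if_close) (use close[of 1 2] close[of 1 3] close[of 2 3] in auto)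
  moreover have "gauss_energy (example_p 1 2) (example_p 1 3) (example_p 2 3) (Y t 1 1) (Y t 2 1) (Y t 3 1)
      \<le> gauss_energy (example_p 1 2) (example_p 1 3) (example_p 2 3)
      (example_Y0 1 1) (example_Y0 2 1) (example_Y0 3 1)"
    by (rule gauss_energy_nonincreasing[OF sol sym_pos_prob_example \<open>t \<ge> 0\<close>])
  moreover have "gauss_energy (example_p 1 2) (example_p 1 3) (example_p 2 3)
      (example_Y0 1 1) (example_Y0 2 1) (example_Y0 3 1) < ln 6 - 1/100"
    unfolding example_values by (rule gauss_energy_example_initial)
  ultimately show False
    by linarith
qed

theorem theorem1p2:
  shows "(\<exists>s n p Y0 (c::real). 1 \<le> s \<and> s + 1 < n \<and> sym_pos_prob n p \<and> c > 0 \<and>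
            (\<forall>Y. is_flow_solution (\<lambda>x. 1 / (1 + x)) s n p Y0 Y \<longrightarrow>
               (\<forall>t\<ge>0. diam_conf s n (Y t) \<ge> c * t powr (1/4))))
       \<and> (\<exists>s n p Y0 (c::real). 1 \<le> s \<and> s + 1 < n \<and> sym_pos_prob n p \<and> c > 0 \<and>
            (\<forall>Y. is_flow_solution (\<lambda>x. exp (- x)) s n p Y0 Y \<longrightarrow>
               (\<forall>t\<ge>0. diam_conf s n (Y t) \<ge> c)))"
proof -
  have "\<forall>Y. is_flow_solution (\<lambda>x. 1 / (1 + x)) 1 3 example_p example_Y0 Y \<longrightarrow>
      (\<forall>t\<ge>0. diam_conf 1 3 (Y t) \<ge> 1 * t powr (1/4))"
    using cauchy_example_diam_growth by simp
  moreover have "\<forall>Y. is_flow_solution (\<lambda>x. exp (- x)) 1 3 example_p example_Y0 Y \<longrightarrow>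
      (\<forall>t\<ge>0. diam_conf 1 3 (Y t) \<ge> 1/10)"
    using gauss_example_diam_bound by simp
  moreover have "(1::nat) \<le> 1" "(1::nat) + 1 < 3" "(0::real) < 1" "(0::real) < 1/10"
    by simp_all
  ultimately show ?thesis
    using sym_pos_prob_example by blast
qed

end
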